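(* Let $\alpha$ be a Heron angle with $0\le\alpha\le\pi$, and let $\lambda$ be a rational number with $0\le\lambda\le1$ such that $\sin\alpha=\lambda^2$. Then $\alpha\in\{0,\pi/2,\pi\}$.
   Context: An angle $\theta$ is called a Heron angle if both $\sin\theta$ and $\cos\theta$ are rational numbers. *)

theory Defs
  imports Complex_Main
begin

definition heron_angle :: "real \<Rightarrow> bool" where
  "heron_angle \<theta> \<longleftrightarrow> sin \<theta> \<in> \<rat> \<and> cos \<theta> \<in> \<rat>"

end

theory Submission
  imports Defs "HOL-Computational_Algebra.Computational_Algebra"
begin

text \<open>
  Since \<open>sin \<alpha> = \<lambda>\<^sup>2\<close> and \<open>cos \<alpha>\<close> are rational, \<open>\<lambda>\<^sup>4 + cos\<^sup>2 \<alpha> = 1\<close>; clearing denominators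
  gives natural numbers with \<open>x\<^sup>4 = y\<^sup>4 + z\<^sup>2\<close>. By Fermat's infinite descent, run through the
  parametrisation of primitive Pythagorean triples, this equation has no solution with
  \<open>y, z > 0\<close>, so \<open>\<lambda> = 0\<close> or \<open>cos \<alpha> = 0\<close>, i.e. \<open>\<alpha> \<in> {0, \<pi>/2, \<pi>}\<close>.
\<close>

lemma coprime_mult_eq_square_nat:
  fixes a b c :: nat
  assumes "coprime a b" "a * b = c^2"
  obtains u v where "a = u^2" "b = v^2"
proof -
  have "is_nth_power 2 (a * b)" using assms(2) by auto
  then have "is_nth_power 2 a \<and> is_nth_power 2 b"
    using is_nth_power_mult_coprime_nat_iff[OF assms(1)] by blast
  then show ?thesis using that by (auto elim!: is_nth_powerE)
qed

lemma square_mod_4_nat: "(a::nat)^2 mod 4 = (if even a then 0 else 1)"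
proof (cases "even a")
  case True
  then obtain k where "a = 2 * k" by blast
  then show ?thesis by (simp add: power2_eq_square)
next
  case False
  then obtain k where "a = 2 * k + 1" by (metis oddE)
  then have "a^2 = 4 * (k^2 + k) + 1" by (simp add: power2_eq_square algebra_simps)
  then show ?thesis using False by simp
qed

lemma odd_squares_sum_not_square:
  fixes a b c :: nat
  assumes "odd a" "odd b"
  shows "a^2 + b^2 \<noteq> c^2"
proof -
  have "(a^2 + b^2) mod 4 = 2"
    using assms by (simp add: mod_add_eq[symmetric] square_mod_4_nat)
  moreover have "c^2 mod 4 \<noteq> 2" by (simp add: square_mod_4_nat)
  ultimately show ?thesis by metis
qed

lemma primitive_pythagorean_triple:
  fixes a b c :: nat
  assumes eq: "a^2 + b^2 = c^2" and cop: "coprime a b" and "even b" and "b > 0"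
  obtains s t where "a = s^2 - t^2" "b = 2 * s * t" "c = s^2 + t^2" "coprime s t" "t < s" "0 < t"
proof -
  have odd_a: "odd a" using cop \<open>even b\<close> by (metis coprime_common_divisor_nat dvd_refl even_Suc odd_one)
  have "odd c" using eq odd_a \<open>even b\<close> by (metis even_add even_power zero_less_numeral)
  have "a^2 < c^2" using eq \<open>b > 0\<close> by (metis less_add_same_cancel1 zero_less_power)
  then obtain d where d: "c = a + d" using power_less_imp_less_base less_imp_add_positive by blast
  have "even d" using d odd_a \<open>odd c\<close> by simp
  then obtain p where p: "d = 2 * p" by blast
  define q where "q = a + p"
  have a_q: "a = q - p" and c_q: "c = q + p" using p d q_def by auto
  obtain w where w: "b = 2 * w" using \<open>even b\<close> by blast
  text \<open>\<open>b\<^sup>2 = c\<^sup>2 - a\<^sup>2 = (c - a)(c + a)\<close> becomes \<open>w\<^sup>2 = p q\<close> with \<open>p, q\<close> coprime.\<close>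
  have "4 * w^2 = 4 * (p * q)"
    using eq w d p unfolding q_def by (simp add: power2_eq_square algebra_simps)
  then have pq: "p * q = w^2" by simp
  have "coprime p q"
  proof (rule coprimeI)
    fix g assume "g dvd p" "g dvd q"
    then have "g dvd a" using a_q by (simp add: dvd_diff_nat)
    have "g^2 dvd w^2" using \<open>g dvd p\<close> \<open>g dvd q\<close> pq by (metis mult_dvd_mono power2_eq_square)
    then have "g dvd b" using w pow_divides_pow_iff[of 2] by simp
    then show "is_unit g" using \<open>g dvd a\<close> cop by (metis coprime_common_divisor)
  qed
  then obtain t s where ts: "p = t^2" "q = s^2" using coprime_mult_eq_square_nat pq by blast
  have "(s * t)^2 = w^2" using pq ts by (simp add: power_mult_distrib mult.commute)
  then have "w = s * t" by (metis power2_eq_iff_nonneg zero_le)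
  have "t < s"
  proof (rule ccontr)
    assume "\<not> t < s"
    then have "a = 0" using a_q ts by (simp add: power_mono)
    then show False using odd_a by simp
  qed
  moreover have "0 < t" using pq ts \<open>b > 0\<close> w by (cases "t = 0") auto
  moreover have "coprime s t" using \<open>coprime p q\<close> ts by (simp add: coprime_commute)
  ultimately show ?thesis using that a_q c_q ts w \<open>w = s * t\<close> by auto
qed

definition quartic_square_solution :: "nat \<Rightarrow> bool" where
  "quartic_square_solution x \<longleftrightarrow> (\<exists>y z. 0 < y \<and> 0 < z \<and> x^4 = y^4 + z^2)"

lemma quartic_square_solution_of_pythagorean_double_square:
  fixes a b c y :: nat
  assumes eq: "a^2 + b^2 = c^2" and "coprime a b" "even b" "0 < b"
    and y: "y^2 = 2 * a * b"
  shows "\<exists>x < c. quartic_square_solution x"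
proof -
  obtain m n where mn: "a = m^2 - n^2" "b = 2 * m * n" "c = m^2 + n^2" "coprime m n" "n < m" "0 < n"
    using primitive_pythagorean_triple[OF assms(1-4)] by blast
  have "n^2 < m^2" using mn by (simp add: power_strict_mono)
  then have m2: "m^2 = a + n^2" and "0 < a" using mn by auto
  have "even (y^2)" using y by simp
  then obtain w where w: "y = 2 * w" by auto
  text \<open>\<open>y\<^sup>2 = 4 m n a\<close> with \<open>m\<close>, \<open>n\<close>, \<open>a\<close> pairwise coprime, so all three are squares.\<close>
  have "4 * w^2 = 4 * (m * n * a)" using y w mn by (simp add: power2_eq_square algebra_simps)
  then have mna: "(m * n) * a = w^2" by simp
  have "coprime m a"
  proof (rule coprimeI)
    fix g assume "g dvd m" "g dvd a"
    moreover have "g dvd m^2" using \<open>g dvd m\<close> by (simp add: power2_eq_square)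
    ultimately have "g dvd n^2" using m2 by (simp add: dvd_add_right_iff)
    then show "is_unit g" using \<open>g dvd m\<close> \<open>coprime m n\<close> by (metis coprime_common_divisor coprime_power_right_iff)
  qed
  moreover have "coprime n a"
  proof (rule coprimeI)
    fix g assume "g dvd n" "g dvd a"
    then have "g dvd m^2" using m2 by (simp add: power2_eq_square)
    then show "is_unit g" using \<open>g dvd n\<close> \<open>coprime m n\<close>
      by (metis coprime_common_divisor coprime_commute coprime_power_right_iff)
  qed
  ultimately have "coprime (m * n) a" by simp
  then obtain A B where "m * n = A^2" "a = B^2" using coprime_mult_eq_square_nat mna by blast
  moreover obtain M N where MN: "m = M^2" "n = N^2"
    using coprime_mult_eq_square_nat \<open>coprime m n\<close> \<open>m * n = A^2\<close> by blast
  ultimately have "M^4 = N^4 + B^2" using m2 by (simp add: power_mult[symmetric])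
  moreover have "0 < N" "0 < B" using MN \<open>0 < n\<close> \<open>a = B^2\<close> \<open>0 < a\<close> by auto
  moreover have "M < c"
  proof -
    have "M \<le> M^4" by (cases "M = 0") (simp_all add: self_le_power)
    moreover have "c = M^4 + N^4" using MN mn by (simp add: power_mult[symmetric])
    moreover have "0 < N^4" using \<open>0 < N\<close> by simp
    ultimately show ?thesis by linarith
  qed
  ultimately show ?thesis unfolding quartic_square_solution_def by blast
qed

lemma quartic_square_descent_common_factor:
  fixes x y z :: nat
  assumes eq: "x^4 = y^4 + z^2" and "0 < y" "0 < z" "\<not> coprime x y"
  shows "\<exists>x' < x. quartic_square_solution x'"
proof -
  define g where "g = gcd x y"
  have "g \<noteq> 1" "0 < g" using assms(2,4) by (simp_all add: g_def coprime_iff_gcd_eq_1)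
  obtain x' y' where xy: "x = g * x'" "y = g * y'" unfolding g_def by (meson dvd_def gcd_dvd1 gcd_dvd2)
  have "g^4 dvd z^2"
    using eq xy by (metis dvd_add_right_iff dvd_triv_left power_mult_distrib)
  then have "(g^2)^2 dvd z^2" by (simp add: power_mult[symmetric])
  then have "g^2 dvd z" by (subst (asm) pow_divides_pow_iff) simp_all
  then obtain z' where z': "z = g^2 * z'" by blast
  have "g^4 * x'^4 = g^4 * (y'^4 + z'^2)"
    using eq xy z' by (simp add: power_mult_distrib power_mult[symmetric] algebra_simps)
  then have "x'^4 = y'^4 + z'^2" using \<open>0 < g\<close> by simp
  moreover have "0 < x" using eq \<open>0 < y\<close> by (cases "x = 0") auto
  then have "x' < x" using xy \<open>g \<noteq> 1\<close> \<open>0 < g\<close> by simp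
  moreover have "0 < y'" "0 < z'" using xy z' assms(2,3) by auto
  ultimately show ?thesis unfolding quartic_square_solution_def by blast
qed

lemma quartic_square_coprime:
  fixes x y z :: nat
  assumes "x^4 = y^4 + z^2" "coprime x y"
  shows "coprime (y^2) z"
proof -
  have "coprime (y^4) (z^2)"
  proof (rule coprimeI)
    fix g assume "g dvd y^4" "g dvd z^2"
    then have "g dvd x^4" using assms(1) by simp
    then show "is_unit g" using \<open>g dvd y^4\<close> assms(2) by (metis coprime_common_divisor coprime_power_left_iff coprime_power_right_iff)
  qed
  then show ?thesis by (simp add: power_mult[symmetric])
qed

lemma quartic_square_descent_odd:
  fixes x y z :: nat
  assumes eq: "x^4 = y^4 + z^2" and "0 < y" "0 < z" "coprime x y" "odd y"
  shows "\<exists>x' < x. quartic_square_solution x'"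
proof -
  have pyth: "(y^2)^2 + z^2 = (x^2)^2" using eq by (simp add: power_mult[symmetric])
  moreover have "odd (y^2)" using \<open>odd y\<close> by simp
  ultimately have "even z" using odd_squares_sum_not_square by blast
  then obtain s t where st: "y^2 = s^2 - t^2" "x^2 = s^2 + t^2" "0 < t" "t < s"
    using primitive_pythagorean_triple[OF pyth quartic_square_coprime[OF eq \<open>coprime x y\<close>]] \<open>0 < z\<close>
    by metis
  text \<open>Multiplying \<open>y\<^sup>2 = s\<^sup>2 - t\<^sup>2\<close> and \<open>x\<^sup>2 = s\<^sup>2 + t\<^sup>2\<close> gives \<open>s\<^sup>4 = t\<^sup>4 + (x y)\<^sup>2\<close>.\<close>
  have "t^2 < s^2" using st by (simp add: power_strict_mono)
  then have s2: "s^2 = y^2 + t^2" using st by simp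
  then have "(s^2)^2 = (t^2)^2 + x^2 * y^2" using st by (simp add: power2_eq_square algebra_simps)
  then have "s^4 = t^4 + (x * y)^2" by (simp add: power_mult[symmetric] power_mult_distrib)
  moreover have "s^2 < x^2" using s2 st \<open>0 < y\<close> by simp
  then have "s < x" using power_less_imp_less_base by blast
  moreover have "0 < x * y" using \<open>0 < y\<close> \<open>s < x\<close> by simp
  ultimately show ?thesis using \<open>0 < t\<close> unfolding quartic_square_solution_def by blast
qed

lemma quartic_square_descent_even:
  fixes x y z :: nat
  assumes eq: "x^4 = y^4 + z^2" and "0 < y" "coprime x y" "even y"
  shows "\<exists>x' < x. quartic_square_solution x'"
proof -
  have pyth: "z^2 + (y^2)^2 = (x^2)^2" using eq by (simp add: power_mult[symmetric])
  have "coprime z (y^2)" using quartic_square_coprime[OF eq \<open>coprime x y\<close>] by (simp add: coprime_commute)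
  moreover have "even (y^2)" "0 < y^2" using \<open>even y\<close> \<open>0 < y\<close> by simp_all
  ultimately obtain s t where st: "y^2 = 2 * s * t" "s^2 + t^2 = x^2" "coprime s t"
    using primitive_pythagorean_triple[OF pyth] by metis
  then have "0 < s" "0 < t" using \<open>0 < y^2\<close> by (auto intro: Nat.gr0I)
  consider "even t" | "even s"
    using odd_squares_sum_not_square st(2) by blast
  then show ?thesis
  proof cases
    case 1
    with st \<open>0 < t\<close> show ?thesis
      by (intro quartic_square_solution_of_pythagorean_double_square[of s t x y]) simp_all
  next
    case 2
    with st \<open>0 < s\<close> show ?thesis
      by (intro quartic_square_solution_of_pythagorean_double_square[of t s x y])
        (simp_all add: coprime_commute add.commute mult.commute mult.left_commute)
  qed
qed

lemma no_quartic_square_solution: "\<not> quartic_square_solution x"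
proof (induction x rule: less_induct)
  case (less x)
  show ?case
  proof
    assume "quartic_square_solution x"
    then obtain y z where "x^4 = y^4 + z^2" "0 < y" "0 < z"
      unfolding quartic_square_solution_def by blast
    then have "\<exists>x' < x. quartic_square_solution x'"
      using quartic_square_descent_common_factor[of x y z] quartic_square_descent_odd[of x y z]
        quartic_square_descent_even[of x y z]
      by (cases "coprime x y"; cases "even y") simp_all
    then show False using less.IH by blast
  qed
qed

lemma int_quartic_eq_quartic_plus_square:
  fixes x y z :: int
  assumes "x^4 = y^4 + z^2"
  shows "y = 0 \<or> z = 0"
proof (rule ccontr)
  assume nonzero: "\<not> (y = 0 \<or> z = 0)"
  have "int (nat \<bar>x\<bar> ^ 4) = int (nat \<bar>y\<bar> ^ 4 + nat \<bar>z\<bar> ^ 2)"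
    using assms by (simp add: power_even_abs_numeral)
  then have "nat \<bar>x\<bar> ^ 4 = nat \<bar>y\<bar> ^ 4 + nat \<bar>z\<bar> ^ 2" by (simp only: of_nat_eq_iff)
  then have "quartic_square_solution (nat \<bar>x\<bar>)"
    unfolding quartic_square_solution_def using nonzero by (intro exI[of _ "nat \<bar>y\<bar>"] exI[of _ "nat \<bar>z\<bar>"]) simp
  then show False using no_quartic_square_solution by blast
qed

lemma rat_quartic_plus_square_eq_1:
  fixes r s :: rat
  assumes "r^4 + s^2 = 1"
  shows "r = 0 \<or> s = 0"
proof -
  obtain p q where r: "r = of_int p / of_int q" "0 < q"
    by (metis prod.exhaust quotient_of_denom_pos quotient_of_div)
  obtain u v where s: "s = of_int u / of_int v" "0 < v"
    by (metis prod.exhaust quotient_of_denom_pos quotient_of_div)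
  have "(of_int p / of_int q)^4 + (of_int u / of_int v)^2 = (1::rat)"
    using assms r s by simp
  then have "of_int (p^4 * v^2 + u^2 * q^4) = (of_int (q^4 * v^2) :: rat)"
    using r s by (simp add: field_simps)
  then have cleared: "p^4 * v^2 + u^2 * q^4 = q^4 * v^2" by (simp only: of_int_eq_iff)
  have "(q * v)^4 = v^2 * (q^4 * v^2)" by algebra
  also have "\<dots> = (p * v)^4 + (u * v * q^2)^2" unfolding cleared[symmetric] by algebra
  finally have "(q * v)^4 = (p * v)^4 + (u * v * q^2)^2" .
  then have "p * v = 0 \<or> u * v * q^2 = 0"
    by (rule int_quartic_eq_quartic_plus_square)
  then show ?thesis using r s by auto
qed

theorem lemma1:
  fixes a :: real and l :: rat
  assumes "heron_angle a"
    and "0 \<le> a" and "a \<le> pi"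
    and "0 \<le> l" and "l \<le> 1"
    and "sin a = (of_rat l)^2"
  shows "a \<in> {0, pi/2, pi}"
proof -
  obtain c where c: "cos a = of_rat c"
    using assms(1) unfolding heron_angle_def by (auto elim: Rats_cases)
  have "of_rat (l^4 + c^2) = (sin a)^2 + (cos a)^2"
    using assms(6) c by (simp add: of_rat_add of_rat_power power_mult[symmetric])
  then have "l^4 + c^2 = 1" by simp
  then consider "l = 0" | "c = 0" using rat_quartic_plus_square_eq_1 by blast
  then show ?thesis
  proof cases
    case 1
    then have "sin a = 0" using assms(6) by simp
    then show ?thesis using sin_zero_pi_iff[of a] assms(2,3) by auto
  next
    case 2
    then have "a = pi/2" using c cos_inj_pi[of a "pi/2"] assms(2,3) by simp
    then show ?thesis by simp
  qed
qed

end
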